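(* Let $n\ge3$. Then $\mathcal{PI}^{\ast}_n$ is generated as a semigroup by $\mathcal{S}_n\cup\{\gamma_{1,2},\gamma_{1,2}^{-1}\}$.
   Context: Let $X=\{1,\dots,n\}$, $X'=\{1',\dots,n'\}$. $\mathcal{PI}^{\ast}_n$ is the set of partitions of $X\cup X'$ each of whose blocks is a singleton (point) or a generalised line (a set meeting both $X$ and $X'$), with product $\star$: with $X''$ a third copy of $X$, regard $\alpha$ as a partition of $X\cup X''$ and $\beta$ as a partition of $X''\cup X'$, let $\sim$ be the equivalence on $X\cup X''\cup X'$ generated by the blocks of both; $\alpha\star\beta$ is the partition of $X\cup X'$ in which distinct $u,v$ are in one block iff $u\sim v$ and the $\sim$-class of $u$ contains no singleton block of $\alpha$ or $\beta$. $\mathcal{S}_n$ is the group of units (elements all of whose blocks are $\{x,\pi(x)'\}$, $\pi$ a permutation). $\gamma_{1,2}$ has blocks $\{1,2,1'\}$, $\{2'\}$ and $\{t,t'\}$ for $3\le t\le n$; $\gamma_{1,2}^{-1}$ has blocks $\{1,1',2'\}$, $\{2\}$ and $\{t,t'\}$ for $3\le t\le n$. *)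

theory Defs
  imports Main
begin

text \<open>Points of X \<union> X': Inl x stands for x, Inr x stands for x'.
  A partition is represented as its set of blocks.\<close>
type_synonym pt = "nat + nat"
type_synonym bpart = "pt set set"

definition carrierX :: "nat \<Rightarrow> pt set" where
  "carrierX n = Inl ` {1..n} \<union> Inr ` {1..n}"

definition is_partition_of :: "'a set \<Rightarrow> 'a set set \<Rightarrow> bool" where
  "is_partition_of A P \<longleftrightarrow> \<Union>P = A \<and> {} \<notin> P \<and>
      (\<forall>B\<in>P. \<forall>C\<in>P. B \<noteq> C \<longrightarrow> B \<inter> C = {})"

definition PIstar :: "nat \<Rightarrow> bpart set" where
  "PIstar n = {P. is_partition_of (carrierX n) P \<and>
      (\<forall>B\<in>P. (\<exists>u. B = {u}) \<or>
               ((\<exists>x. Inl x \<in> B) \<and> (\<exists>x. Inr x \<in> B)))}"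

text \<open>Three copies X, X'', X' encoded as (i,0), (i,1), (i,2).\<close>
fun emb1 :: "pt \<Rightarrow> nat \<times> nat" where
  "emb1 (Inl x) = (x, 0)" | "emb1 (Inr x) = (x, 1)"
fun emb2 :: "pt \<Rightarrow> nat \<times> nat" where
  "emb2 (Inl x) = (x, 1)" | "emb2 (Inr x) = (x, 2)"
fun embo :: "pt \<Rightarrow> nat \<times> nat" where
  "embo (Inl x) = (x, 0)" | "embo (Inr x) = (x, 2)"

definition joint_blocks :: "bpart \<Rightarrow> bpart \<Rightarrow> (nat \<times> nat) set set" where
  "joint_blocks a b = (image emb1) ` a \<union> (image emb2) ` b"

definition joint_sim :: "bpart \<Rightarrow> bpart \<Rightarrow> ((nat \<times> nat) \<times> (nat \<times> nat)) set" where
  "joint_sim a b = (\<Union>B\<in>joint_blocks a b. B \<times> B)\<^sup>*"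

definition singleton_pts :: "bpart \<Rightarrow> bpart \<Rightarrow> (nat \<times> nat) set" where
  "singleton_pts a b = \<Union>{B \<in> joint_blocks a b. \<exists>w. B = {w}}"

definition star_rel :: "nat \<Rightarrow> bpart \<Rightarrow> bpart \<Rightarrow> pt rel" where
  "star_rel n a b = {(u, v). u \<in> carrierX n \<and> v \<in> carrierX n \<and>
      (u = v \<or> ((embo u, embo v) \<in> joint_sim a b \<and>
          \<not> (\<exists>w. (embo u, w) \<in> joint_sim a b \<and> w \<in> singleton_pts a b)))}"

definition star :: "nat \<Rightarrow> bpart \<Rightarrow> bpart \<Rightarrow> bpart" where
  "star n a b = carrierX n // star_rel n a b"

definition units :: "nat \<Rightarrow> bpart set" where
  "units n = {P. \<exists>\<pi>. bij_betw \<pi> {1..n} {1..n} \<and>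
      P = (\<lambda>x. {Inl x, Inr (\<pi> x)}) ` {1..n}}"

definition gamma12 :: "nat \<Rightarrow> bpart" where
  "gamma12 n = {{Inl 1, Inl 2, Inr 1}, {Inr 2}} \<union> (\<lambda>t. {Inl t, Inr t}) ` {3..n}"

definition gamma12_inv :: "nat \<Rightarrow> bpart" where
  "gamma12_inv n = {{Inl 1, Inr 1, Inr 2}, {Inl 2}} \<union> (\<lambda>t. {Inl t, Inr t}) ` {3..n}"

inductive_set semigen :: "nat \<Rightarrow> bpart set \<Rightarrow> bpart set" for n A where
  base: "a \<in> A \<Longrightarrow> a \<in> semigen n A"
| prod: "a \<in> semigen n A \<Longrightarrow> b \<in> semigen n A \<Longrightarrow> star n a b \<in> semigen n A"

end

theory Submission
  imports Defs "HOL-Library.Disjoint_Sets" "HOL-Combinatorics.Transposition"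
begin

text \<open>
  An element of \<open>PIstar n\<close> is described by labelling its blocks: naming every line by an index in
  \<open>{1..n}\<close>, it factors as \<open>\<alpha> \<star> \<beta>\<^sup>*\<close>, where the partial maps \<open>\<alpha>\<close> and \<open>\<beta>\<close> send the
  upper, resp. lower, points of a line to its name and \<open>(_)\<^sup>*\<close> is the involution exchanging
  \<open>X\<close> and \<open>X'\<close>. This involution reverses products and fixes the generating set, so it remains
  to generate all partial maps. The units are the permutations and \<open>\<gamma>\<^sub>1\<^sub>2\<close> is the total map
  sending \<open>2\<close> to \<open>1\<close>; \<open>\<gamma>\<^sub>1\<^sub>2\<^sup>-\<^sup>1 \<star> \<gamma>\<^sub>1\<^sub>2\<close> is the identity on \<open>{1..n} - {2}\<close>. Its
  conjugates by permutations and their products give all partial identities, hence with the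
  permutations all injective partial maps; conjugates of \<open>\<gamma>\<^sub>1\<^sub>2\<close> merge any two points, and a
  non-injective partial map is a merge applied after a partial map with larger image.

  Products are computed by labelling the three layers \<open>X\<close>, \<open>X''\<close>, \<open>X'\<close> with the classes
  of the equivalence \<open>\<sim>\<close> of the product.
\<close>

lemma inj_on_extends_to_bij_betw:
  assumes "finite X" "D \<subseteq> X" "f ` D \<subseteq> X" "inj_on f D"
  obtains \<pi> where "bij_betw \<pi> X X" "\<And>x. x \<in> D \<Longrightarrow> \<pi> x = f x"
proof -
  have "finite D"
    using assms finite_subset by blast
  then have "card (X - D) = card (X - f ` D)"
    using assms card_Diff_subset[of D X] card_Diff_subset[of "f ` D" X] card_image[of f D] by simp
  then obtain h where h: "bij_betw h (X - D) (X - f ` D)"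
    using finite_same_card_bij[of "X - D" "X - f ` D"] assms(1) by blast
  define \<pi> where "\<pi> x = (if x \<in> D then f x else h x)" for x
  have "bij_betw \<pi> D (f ` D)"
    using inj_on_imp_bij_betw[OF assms(4)] by (rule bij_betw_cong[THEN iffD1, rotated]) (simp add: \<pi>_def)
  moreover have "bij_betw \<pi> (X - D) (X - f ` D)"
    using h by (rule bij_betw_cong[THEN iffD1, rotated]) (simp add: \<pi>_def)
  ultimately have "bij_betw \<pi> (D \<union> (X - D)) (f ` D \<union> (X - f ` D))"
    by (rule bij_betw_combine) blast
  then show ?thesis
    using that[of \<pi>] assms(2,3) by (simp add: \<pi>_def Un_absorb1)
qed

lemma not_inj_on_obtain_non_value:
  assumes "finite X" "D \<subseteq> X" "\<not> inj_on f D"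
  obtains w where "w \<in> X" "w \<notin> f ` D"
proof -
  have "finite D"
    using assms(1,2) finite_subset by blast
  then have "card (f ` D) < card D"
    using assms(3) card_image_le inj_on_iff_eq_card le_neq_implies_less by blast
  also have "card D \<le> card X"
    using assms(1,2) by (rule card_mono)
  finally have "\<not> X \<subseteq> f ` D"
    using card_mono[OF finite_imageI[OF \<open>finite D\<close>]] by (meson not_le)
  then show ?thesis
    using that by blast
qed

lemma Inl_in_carrierX [simp]: "Inl x \<in> carrierX n \<longleftrightarrow> x \<in> {1..n}"
  by (auto simp: carrierX_def)

lemma Inr_in_carrierX [simp]: "Inr x \<in> carrierX n \<longleftrightarrow> x \<in> {1..n}"
  by (auto simp: carrierX_def)

lemma ball_carrierX: "(\<forall>u\<in>carrierX n. P u) \<longleftrightarrow> (\<forall>x\<in>{1..n}. P (Inl x)) \<and> (\<forall>y\<in>{1..n}. P (Inr y))"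
  by (auto simp: carrierX_def)

lemma bex_carrierX: "(\<exists>u\<in>carrierX n. P u) \<longleftrightarrow> (\<exists>x\<in>{1..n}. P (Inl x)) \<or> (\<exists>y\<in>{1..n}. P (Inr y))"
  by (auto simp: carrierX_def)

lemma is_partition_of_iff_partition_on: "is_partition_of A P \<longleftrightarrow> partition_on A P"
  by (auto simp: is_partition_of_def partition_on_def disjoint_def)

section \<open>Partitions given by labellings\<close>

text \<open>A labelling \<open>L\<close> describes the partition of \<open>carrierX n\<close> whose blocks are the nonempty
  level sets \<open>L -` {Some l}\<close>, together with a singleton block \<open>{u}\<close> for every \<open>u\<close> with
  \<open>L u = None\<close>.\<close>

definition label_rel :: "nat \<Rightarrow> (pt \<Rightarrow> 'c option) \<Rightarrow> pt rel" where
  "label_rel n L = {(u, v). u \<in> carrierX n \<and> v \<in> carrierX n \<and> (u = v \<or> (L u \<noteq> None \<and> L u = L v))}"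

definition labelled :: "nat \<Rightarrow> (pt \<Rightarrow> 'c option) \<Rightarrow> bpart" where
  "labelled n L = carrierX n // label_rel n L"

definition line_labelling :: "nat \<Rightarrow> (pt \<Rightarrow> 'c option) \<Rightarrow> bool" where
  "line_labelling n L \<longleftrightarrow> (\<forall>u\<in>carrierX n. L u \<noteq> None \<longrightarrow>
     (\<exists>x\<in>{1..n}. L (Inl x) = L u) \<and> (\<exists>y\<in>{1..n}. L (Inr y) = L u))"

lemma equiv_label_rel: "equiv (carrierX n) (label_rel n L)"
  unfolding equiv_def refl_on_def sym_def trans_def label_rel_def by auto metis

lemma label_rel_Image:
  "u \<in> carrierX n \<Longrightarrow>
   label_rel n L `` {u} = (if L u = None then {u} else {v \<in> carrierX n. L v = L u})"
  unfolding label_rel_def by auto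

lemma labelled_eq_image: "labelled n L = (\<lambda>u. label_rel n L `` {u}) ` carrierX n"
  unfolding labelled_def quotient_def by auto

lemma label_rel_Image_in_labelled: "u \<in> carrierX n \<Longrightarrow> label_rel n L `` {u} \<in> labelled n L"
  by (auto simp: labelled_eq_image)

lemma labelled_blockE:
  assumes "B \<in> labelled n L"
  obtains u where "u \<in> carrierX n" "B = label_rel n L `` {u}"
  using assms by (auto simp: labelled_eq_image)

lemma labelled_block_rel: "B \<in> labelled n L \<Longrightarrow> u \<in> B \<Longrightarrow> v \<in> B \<Longrightarrow> (u, v) \<in> label_rel n L"
  unfolding labelled_def using quotient_eq_iff[OF equiv_label_rel] by metis

lemma labelled_eq_level_sets:
  "labelled n L = (\<lambda>l. {u \<in> carrierX n. L u = Some l}) ` {l. \<exists>u\<in>carrierX n. L u = Some l}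
     \<union> (\<lambda>u. {u}) ` {u \<in> carrierX n. L u = None}" (is "_ = ?rhs")
proof (intro equalityI subsetI)
  fix B assume "B \<in> labelled n L"
  then obtain u where u: "u \<in> carrierX n" "B = label_rel n L `` {u}"
    by (rule labelled_blockE)
  then show "B \<in> ?rhs"
    by (cases "L u") (auto simp: label_rel_Image)
next
  fix B assume "B \<in> ?rhs"
  then consider l u where "u \<in> carrierX n" "L u = Some l" "B = {v \<in> carrierX n. L v = Some l}"
    | u where "u \<in> carrierX n" "L u = None" "B = {u}"
    by blast
  then have "\<exists>u\<in>carrierX n. B = label_rel n L `` {u}"
    by cases (force simp: label_rel_Image)+
  then show "B \<in> labelled n L"
    by (auto simp: label_rel_Image_in_labelled)
qed

lemma labelled_cong:
  assumes "\<And>u. u \<in> carrierX n \<Longrightarrow> L1 u = map_option h (L2 u)"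
    and "inj_on h {l. \<exists>u\<in>carrierX n. L2 u = Some l}"
  shows "labelled n L1 = labelled n L2"
proof -
  have "L1 u \<noteq> None \<and> L1 u = L1 v \<longleftrightarrow> L2 u \<noteq> None \<and> L2 u = L2 v"
    if "u \<in> carrierX n" "v \<in> carrierX n" for u v
    using assms(1)[OF that(1)] assms(1)[OF that(2)] assms(2) that
    by (cases "L2 u"; cases "L2 v") (auto dest: inj_onD)
  then have "label_rel n L1 = label_rel n L2"
    unfolding label_rel_def by blast
  then show ?thesis
    by (simp add: labelled_def)
qed

lemma line_labelling_nonsingleton:
  assumes "line_labelling n L" "u \<in> carrierX n" "L u \<noteq> None"
  obtains x y where "x \<in> {1..n}" "y \<in> {1..n}" "Inl x \<in> label_rel n L `` {u}" "Inr y \<in> label_rel n L `` {u}"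
proof -
  obtain x y where "x \<in> {1..n}" "L (Inl x) = L u" "y \<in> {1..n}" "L (Inr y) = L u"
    using assms unfolding line_labelling_def by blast
  then show ?thesis
    using that assms(2,3) by (simp add: label_rel_Image)
qed

lemma labelled_in_PIstar:
  assumes "line_labelling n L"
  shows "labelled n L \<in> PIstar n"
proof -
  have "partition_on (carrierX n) (labelled n L)"
    unfolding labelled_def by (rule partition_on_quotient[OF equiv_label_rel])
  moreover have "(\<exists>u. B = {u}) \<or> ((\<exists>x. Inl x \<in> B) \<and> (\<exists>x. Inr x \<in> B))"
    if "B \<in> labelled n L" for B
  proof -
    obtain u where u: "u \<in> carrierX n" "B = label_rel n L `` {u}"
      using \<open>B \<in> labelled n L\<close> by (rule labelled_blockE)
    show ?thesis
    proof (cases "L u = None")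
      case True
      then show ?thesis using u by (simp add: label_rel_Image)
    next
      case False
      then show ?thesis
        using line_labelling_nonsingleton[OF assms u(1)] u(2) by metis
    qed
  qed
  ultimately show ?thesis
    by (auto simp: PIstar_def is_partition_of_iff_partition_on)
qed

text \<open>The witness labels every point by its block, except that points forming a singleton block
  get the label \<open>None\<close>.\<close>

lemma PIstar_obtain_line_labelling:
  assumes "P \<in> PIstar n"
  obtains L :: "pt \<Rightarrow> pt set option" where "line_labelling n L" "P = labelled n L"
proof -
  let ?A = "carrierX n"
  define r where "r = {(x, y). \<exists>B\<in>P. x \<in> B \<and> y \<in> B}"
  have part: "partition_on ?A P"
    and lines: "\<And>B. B \<in> P \<Longrightarrow> (\<exists>u. B = {u}) \<or> ((\<exists>x. Inl x \<in> B) \<and> (\<exists>x. Inr x \<in> B))"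
    using assms by (auto simp: PIstar_def is_partition_of_iff_partition_on)
  have r: "equiv ?A r" and P: "P = ?A // r"
    using equiv_partition_on[OF part] partition_on_eq_quotient[OF part] by (simp_all add: r_def)
  define L where "L u = (if \<exists>w. r `` {u} = {w} then None else Some (r `` {u}))" for u
  have "label_rel n L = r"
  proof safe
    fix u v assume "(u, v) \<in> label_rel n L"
    then show "(u, v) \<in> r"
      using r by (auto simp: label_rel_def L_def equiv_def refl_on_def split: if_splits)
  next
    fix u v assume uv: "(u, v) \<in> r"
    then have "u \<in> ?A" "v \<in> ?A" "r `` {u} = r `` {v}"
      using r equiv_class_eq[OF r uv] by (auto simp: equiv_def)
    moreover have "u = v" if "r `` {u} = {w}" for w
      using that uv r \<open>u \<in> ?A\<close> by (metis Image_singleton_iff equiv_class_self singletonD)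
    ultimately show "(u, v) \<in> label_rel n L"
      by (auto simp: label_rel_def L_def)
  qed
  then have "P = labelled n L"
    by (simp add: P labelled_def)
  moreover have "line_labelling n L"
    unfolding line_labelling_def
  proof (intro ballI impI)
    fix u assume u: "u \<in> ?A" "L u \<noteq> None"
    then have "r `` {u} \<in> P" and ns: "\<nexists>w. r `` {u} = {w}"
      by (auto simp: P quotientI L_def split: if_splits)
    then obtain x y where xy: "Inl x \<in> r `` {u}" "Inr y \<in> r `` {u}"
      using lines by blast
    then have "(u, Inl x) \<in> r" "(u, Inr y) \<in> r"
      by auto
    then have "x \<in> {1..n}" "y \<in> {1..n}" "r `` {Inl x} = r `` {u}" "r `` {Inr y} = r `` {u}"
      using r by (auto simp: equiv_def dest: equiv_class_eq[OF r, symmetric])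
    then show "(\<exists>x\<in>{1..n}. L (Inl x) = L u) \<and> (\<exists>y\<in>{1..n}. L (Inr y) = L u)"
      by (intro conjI bexI[of _ x] bexI[of _ y]) (simp_all add: L_def)
  qed
  ultimately show ?thesis
    using that by blast
qed

lemma labelled_singleton_block:
  assumes "line_labelling n L" "{w} \<in> labelled n L"
  shows "w \<in> carrierX n \<and> L w = None"
proof -
  obtain u where u: "u \<in> carrierX n" "{w} = label_rel n L `` {u}"
    using assms(2) by (rule labelled_blockE)
  have "u \<in> label_rel n L `` {u}"
    by (rule equiv_class_self[OF equiv_label_rel u(1)])
  then have "w = u"
    using u(2) by auto
  moreover have "L u = None"
    by (rule ccontr) (metis line_labelling_nonsingleton[OF assms(1) u(1)] u(2) singletonD sum.distinct(1))
  ultimately show ?thesis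
    using u(1) by simp
qed

section \<open>The product of labelled partitions\<close>

lemma equiv_joint_sim: "equiv UNIV (joint_sim a b)"
proof -
  have "sym (\<Union>B\<in>joint_blocks a b. B \<times> B)"
    by (rule symI) blast
  then show ?thesis
    unfolding joint_sim_def by (intro equivI refl_rtrancl sym_rtrancl trans_rtrancl) auto
qed

lemma joint_sim_refl [simp]: "(p, p) \<in> joint_sim a b"
  by (simp add: joint_sim_def)

lemma joint_sim_sym: "(p, q) \<in> joint_sim a b \<Longrightarrow> (q, p) \<in> joint_sim a b"
  using equiv_joint_sim by (meson equivE symD)

lemma joint_sim_trans: "(p, q) \<in> joint_sim a b \<Longrightarrow> (q, r) \<in> joint_sim a b \<Longrightarrow> (p, r) \<in> joint_sim a b"
  using equiv_joint_sim by (meson equivE transD)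

lemma joint_sim_left_block:
  assumes "u \<in> carrierX n" "v \<in> carrierX n" "La u \<noteq> None" "La v = La u"
  shows "(emb1 u, emb1 v) \<in> joint_sim (labelled n La) b"
proof -
  let ?C = "label_rel n La `` {u}"
  have "emb1 ` ?C \<in> joint_blocks (labelled n La) b"
    using label_rel_Image_in_labelled[OF assms(1)] by (auto simp: joint_blocks_def)
  moreover have "u \<in> ?C" "v \<in> ?C"
    using assms by (auto simp: label_rel_Image)
  ultimately show ?thesis
    unfolding joint_sim_def by blast
qed

lemma joint_sim_right_block:
  assumes "u \<in> carrierX n" "v \<in> carrierX n" "Lb u \<noteq> None" "Lb v = Lb u"
  shows "(emb2 u, emb2 v) \<in> joint_sim a (labelled n Lb)"
proof -
  let ?C = "label_rel n Lb `` {u}"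
  have "emb2 ` ?C \<in> joint_blocks a (labelled n Lb)"
    using label_rel_Image_in_labelled[OF assms(1)] by (auto simp: joint_blocks_def)
  moreover have "u \<in> ?C" "v \<in> ?C"
    using assms by (auto simp: label_rel_Image)
  ultimately show ?thesis
    unfolding joint_sim_def by blast
qed

lemma singleton_pts_labelled:
  assumes "line_labelling n La" "line_labelling n Lb"
  shows "singleton_pts (labelled n La) (labelled n Lb) =
    emb1 ` {u \<in> carrierX n. La u = None} \<union> emb2 ` {u \<in> carrierX n. Lb u = None}"
proof -
  have "{B \<in> image g ` labelled n L. \<exists>w. B = {w}} = (\<lambda>u. {g u}) ` {u \<in> carrierX n. L u = None}"
    if L: "line_labelling n L" and g: "inj g" for g :: "pt \<Rightarrow> nat \<times> nat" and L :: "pt \<Rightarrow> 'c option"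
  proof (intro equalityI subsetI)
    fix B' assume "B' \<in> {B \<in> image g ` labelled n L. \<exists>w. B = {w}}"
    then obtain B w where B: "B \<in> labelled n L" "{w} = g ` B" "B' = {w}"
      by auto
    then obtain u where "B = {u}"
      using inj_img_insertE[of g B w "{}"] g by (metis empty_iff image_is_empty inj_on_subset top_greatest)
    then show "B' \<in> (\<lambda>u. {g u}) ` {u \<in> carrierX n. L u = None}"
      using labelled_singleton_block[OF L] B by auto
  next
    fix B' assume "B' \<in> (\<lambda>u. {g u}) ` {u \<in> carrierX n. L u = None}"
    then obtain u where u: "u \<in> carrierX n" "L u = None" "B' = {g u}"
      by auto
    then have "{u} \<in> labelled n L"
      using label_rel_Image_in_labelled[of u n L] by (simp add: label_rel_Image)
    then show "B' \<in> {B \<in> image g ` labelled n L. \<exists>w. B = {w}}"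
      using u(3) image_eqI[of B' "image g" "{u}"] by simp
  qed
  moreover have "inj emb1" "inj emb2"
    by (auto intro!: injI elim!: emb1.elims emb2.elims)
  ultimately have sing1: "{B \<in> image emb1 ` labelled n La. \<exists>w. B = {w}} =
      (\<lambda>u. {emb1 u}) ` {u \<in> carrierX n. La u = None}"
    and sing2: "{B \<in> image emb2 ` labelled n Lb. \<exists>w. B = {w}} =
      (\<lambda>u. {emb2 u}) ` {u \<in> carrierX n. Lb u = None}"
    using assms by blast+
  have "{B \<in> joint_blocks (labelled n La) (labelled n Lb). \<exists>w. B = {w}} =
      {B \<in> image emb1 ` labelled n La. \<exists>w. B = {w}} \<union> {B \<in> image emb2 ` labelled n Lb. \<exists>w. B = {w}}"
    unfolding joint_blocks_def by blast
  also have "\<dots> = (\<lambda>u. {emb1 u}) ` {u \<in> carrierX n. La u = None} \<union>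
      (\<lambda>u. {emb2 u}) ` {u \<in> carrierX n. Lb u = None}"
    unfolding sing1 sing2 ..
  finally have "{B \<in> joint_blocks (labelled n La) (labelled n Lb). \<exists>w. B = {w}} = \<dots>" .
  moreover have "\<Union>((\<lambda>u. {f u}) ` A) = f ` A" for f :: "pt \<Rightarrow> nat \<times> nat" and A
    by blast
  ultimately show ?thesis
    unfolding singleton_pts_def by (simp only: Union_Un_distrib)
qed

definition classifies :: "nat \<Rightarrow> (pt \<Rightarrow> 'a option) \<Rightarrow> (pt \<Rightarrow> 'b option) \<Rightarrow> (nat \<times> nat \<Rightarrow> 'k) \<Rightarrow> bool" where
  "classifies n La Lb K \<longleftrightarrow>
     (\<forall>p q. K p = K q \<longleftrightarrow> (p, q) \<in> joint_sim (labelled n La) (labelled n Lb))"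

definition class_avoids_points ::
    "nat \<Rightarrow> (pt \<Rightarrow> 'a option) \<Rightarrow> (pt \<Rightarrow> 'b option) \<Rightarrow> (nat \<times> nat \<Rightarrow> 'k) \<Rightarrow> 'k \<Rightarrow> bool" where
  "class_avoids_points n La Lb K k \<longleftrightarrow>
     (\<forall>u\<in>carrierX n. La u = None \<longrightarrow> K (emb1 u) \<noteq> k) \<and>
     (\<forall>u\<in>carrierX n. Lb u = None \<longrightarrow> K (emb2 u) \<noteq> k)"

definition star_label ::
    "nat \<Rightarrow> (pt \<Rightarrow> 'a option) \<Rightarrow> (pt \<Rightarrow> 'b option) \<Rightarrow> (nat \<times> nat \<Rightarrow> 'k) \<Rightarrow> pt \<Rightarrow> 'k option" where
  "star_label n La Lb K u =
     (if class_avoids_points n La Lb K (K (embo u)) then Some (K (embo u)) else None)"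

lemma classifiesD: "classifies n La Lb K \<Longrightarrow> K p = K q \<longleftrightarrow> (p, q) \<in> joint_sim (labelled n La) (labelled n Lb)"
  unfolding classifies_def by blast

lemma classifiesI:
  assumes left: "\<And>u v. u \<in> carrierX n \<Longrightarrow> v \<in> carrierX n \<Longrightarrow> La u \<noteq> None \<Longrightarrow> La v = La u \<Longrightarrow>
      K (emb1 u) = K (emb1 v)"
    and right: "\<And>u v. u \<in> carrierX n \<Longrightarrow> v \<in> carrierX n \<Longrightarrow> Lb u \<noteq> None \<Longrightarrow> Lb v = Lb u \<Longrightarrow>
      K (emb2 u) = K (emb2 v)"
    and connected: "\<And>p q. K p = K q \<Longrightarrow> (p, q) \<in> joint_sim (labelled n La) (labelled n Lb)"
  shows "classifies n La Lb K"
proof -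
  have "K p = K q" if "(p, q) \<in> joint_sim (labelled n La) (labelled n Lb)" for p q
    using that unfolding joint_sim_def
  proof (induction rule: rtrancl_induct)
    case (step y z)
    then obtain B where B: "B \<in> joint_blocks (labelled n La) (labelled n Lb)" "y \<in> B" "z \<in> B"
      by blast
    have "K y = K z"
    proof (cases "B \<in> image emb1 ` labelled n La")
      case True
      then obtain C v w where "C \<in> labelled n La" "v \<in> C" "w \<in> C" "y = emb1 v" "z = emb1 w"
        using B by blast
      then show ?thesis
        using labelled_block_rel left by (fastforce simp: label_rel_def)
    next
      case False
      then obtain C v w where "C \<in> labelled n Lb" "v \<in> C" "w \<in> C" "y = emb2 v" "z = emb2 w"
        using B by (auto simp: joint_blocks_def)
      then show ?thesis
        using labelled_block_rel right by (fastforce simp: label_rel_def)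
    qed
    then show ?case
      using step.IH by simp
  qed simp
  then show ?thesis
    unfolding classifies_def using connected by blast
qed

lemma star_labelled:
  assumes "line_labelling n La" "line_labelling n Lb" and K: "classifies n La Lb K"
  shows "star n (labelled n La) (labelled n Lb) = labelled n (star_label n La Lb K)"
proof -
  let ?a = "labelled n La" and ?b = "labelled n Lb"
  have js: "(p, q) \<in> joint_sim ?a ?b \<longleftrightarrow> K q = K p" for p q
    using classifiesD[OF K, of q p] joint_sim_sym by blast
  have "(\<exists>w. (embo u, w) \<in> joint_sim ?a ?b \<and> w \<in> singleton_pts ?a ?b) \<longleftrightarrow>
      (\<exists>v\<in>carrierX n. La v = None \<and> K (emb1 v) = K (embo u)) \<or>
      (\<exists>v\<in>carrierX n. Lb v = None \<and> K (emb2 v) = K (embo u))" for u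
    unfolding singleton_pts_labelled[OF assms(1,2)] js by blast
  then have points: "(\<exists>w. (embo u, w) \<in> joint_sim ?a ?b \<and> w \<in> singleton_pts ?a ?b) \<longleftrightarrow>
      \<not> class_avoids_points n La Lb K (K (embo u))" for u
    unfolding class_avoids_points_def by blast
  then have "star_rel n ?a ?b = label_rel n (star_label n La Lb K)"
    unfolding star_rel_def label_rel_def star_label_def points js by (auto split: if_splits)
  then show ?thesis
    unfolding star_def labelled_def by simp
qed

definition joint_class :: "bpart \<Rightarrow> bpart \<Rightarrow> nat \<times> nat \<Rightarrow> (nat \<times> nat) set" where
  "joint_class a b p = joint_sim a b `` {p}"

lemma classifies_joint_class: "classifies n La Lb (joint_class (labelled n La) (labelled n Lb))"
  unfolding classifies_def joint_class_def using equiv_class_eq_iff[OF equiv_joint_sim] by simp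

definition label_class :: "('p \<Rightarrow> 'c option) \<Rightarrow> 'p \<Rightarrow> 'c + 'p" where
  "label_class M p = (case M p of Some l \<Rightarrow> Inl l | None \<Rightarrow> Inr p)"

lemma label_class_eq_iff: "label_class M p = label_class M q \<longleftrightarrow> p = q \<or> (M p \<noteq> None \<and> M p = M q)"
  by (auto simp: label_class_def split: option.splits)

lemma label_class_None [simp]: "M p = None \<Longrightarrow> label_class M p = Inr p"
  and label_class_Some [simp]: "M p = Some l \<Longrightarrow> label_class M p = Inl l"
  by (simp_all add: label_class_def)

lemma joint_sim_if_label_class_eq:
  assumes push: "\<And>p. (p, A p) \<in> joint_sim a b"
    and connected: "\<And>p q. M p \<noteq> None \<Longrightarrow> M p = M q \<Longrightarrow> (p, q) \<in> joint_sim a b"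
    and "label_class M (A p) = label_class M (A q)"
  shows "(p, q) \<in> joint_sim a b"
proof -
  have "A p = A q \<or> (M (A p) \<noteq> None \<and> M (A p) = M (A q))"
    using assms(3) by (simp add: label_class_eq_iff)
  then have "(A p, A q) \<in> joint_sim a b"
    by (elim disjE conjE) (simp, rule connected)
  then show ?thesis
    using push[of p] push[of q] joint_sim_sym joint_sim_trans by blast
qed

lemma star_label_left_point:
  "v \<in> carrierX n \<Longrightarrow> La v = None \<Longrightarrow> K (embo u) = K (emb1 v) \<Longrightarrow> star_label n La Lb K u = None"
  by (auto simp: star_label_def class_avoids_points_def)

lemma star_label_right_point:
  "v \<in> carrierX n \<Longrightarrow> Lb v = None \<Longrightarrow> K (embo u) = K (emb2 v) \<Longrightarrow> star_label n La Lb K u = None"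
  by (auto simp: star_label_def class_avoids_points_def)

section \<open>The involution\<close>

fun flip_pt :: "pt \<Rightarrow> pt" where
  "flip_pt (Inl x) = Inr x"
| "flip_pt (Inr x) = Inl x"

definition mirror :: "bpart \<Rightarrow> bpart" where
  "mirror P = image flip_pt ` P"

fun flip_layer :: "nat \<times> nat \<Rightarrow> nat \<times> nat" where
  "flip_layer (x, k) = (x, if k \<le> 2 then 2 - k else k)"

lemma flip_pt_flip_pt [simp]: "flip_pt (flip_pt u) = u"
  by (cases u) auto

lemma flip_pt_in_carrierX [simp]: "flip_pt u \<in> carrierX n \<longleftrightarrow> u \<in> carrierX n"
  by (cases u) auto

lemma image_flip_pt_carrierX [simp]: "flip_pt ` carrierX n = carrierX n"
  by (simp add: carrierX_def image_Un image_image Un_commute)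

lemma mirror_mirror [simp]: "mirror (mirror P) = P"
  by (simp add: mirror_def image_image)

lemma flip_layer_flip_layer [simp]: "flip_layer (flip_layer p) = p"
  by (cases p) auto

lemma flip_layer_emb1 [simp]: "flip_layer (emb1 u) = emb2 (flip_pt u)"
  and flip_layer_emb2 [simp]: "flip_layer (emb2 u) = emb1 (flip_pt u)"
  and flip_layer_embo [simp]: "flip_layer (embo u) = embo (flip_pt u)"
  by (cases u; simp)+

lemma joint_sim_mirror:
  assumes "(p, q) \<in> joint_sim a b"
  shows "(flip_layer p, flip_layer q) \<in> joint_sim (mirror b) (mirror a)"
  using assms unfolding joint_sim_def
proof (induction rule: rtrancl_induct)
  case (step y z)
  then obtain B where B: "B \<in> joint_blocks a b" "y \<in> B" "z \<in> B"
    by blast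
  have "image flip_layer (image emb1 C) = image emb2 (image flip_pt C)"
    and "image flip_layer (image emb2 C) = image emb1 (image flip_pt C)" for C
    by (simp_all add: image_image)
  then have "flip_layer ` B \<in> joint_blocks (mirror b) (mirror a)"
    using B(1) unfolding joint_blocks_def mirror_def by auto
  then have "(flip_layer y, flip_layer z) \<in> (\<Union>B\<in>joint_blocks (mirror b) (mirror a). B \<times> B)"
    using B(2,3) by blast
  then show ?case
    using step.IH by (rule rtrancl_into_rtrancl[rotated])
qed simp

lemma joint_sim_mirror_iff:
  "(flip_layer p, flip_layer q) \<in> joint_sim a b \<longleftrightarrow> (p, q) \<in> joint_sim (mirror b) (mirror a)"
  using joint_sim_mirror[of "flip_layer p" "flip_layer q" a b] joint_sim_mirror[of p q "mirror b" "mirror a"]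
  by auto

lemma mirror_labelled: "mirror (labelled n L) = labelled n (L \<circ> flip_pt)"
proof -
  have "label_rel n (L \<circ> flip_pt) `` {u} = flip_pt ` (label_rel n L `` {flip_pt u})"
    if "u \<in> carrierX n" for u
  proof -
    have "{v \<in> carrierX n. L (flip_pt v) = L (flip_pt u)} = flip_pt ` {v \<in> carrierX n. L v = L (flip_pt u)}"
      by (auto simp: image_iff) (metis flip_pt_in_carrierX flip_pt_flip_pt)
    then show ?thesis
      using that by (simp add: label_rel_Image)
  qed
  then have "labelled n (L \<circ> flip_pt) = (\<lambda>u. flip_pt ` (label_rel n L `` {flip_pt u})) ` carrierX n"
    by (simp add: labelled_eq_image)
  also have "\<dots> = (\<lambda>u. flip_pt ` (label_rel n L `` {u})) ` flip_pt ` carrierX n"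
    by (simp only: image_image)
  also have "\<dots> = mirror (labelled n L)"
    by (simp add: labelled_eq_image mirror_def image_image)
  finally show ?thesis ..
qed

lemma line_labelling_comp_flip_pt:
  assumes "line_labelling n L"
  shows "line_labelling n (L \<circ> flip_pt)"
  unfolding line_labelling_def
proof (intro ballI impI)
  fix u assume "u \<in> carrierX n" "(L \<circ> flip_pt) u \<noteq> None"
  then have "flip_pt u \<in> carrierX n" "L (flip_pt u) \<noteq> None"
    by simp_all
  then obtain x y where "x \<in> {1..n}" "L (Inl x) = L (flip_pt u)" "y \<in> {1..n}" "L (Inr y) = L (flip_pt u)"
    using assms unfolding line_labelling_def by blast
  then show "(\<exists>x\<in>{1..n}. (L \<circ> flip_pt) (Inl x) = (L \<circ> flip_pt) u) \<and>
      (\<exists>y\<in>{1..n}. (L \<circ> flip_pt) (Inr y) = (L \<circ> flip_pt) u)"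
    by auto
qed

lemma classifies_mirror:
  assumes "classifies n La Lb K"
  shows "classifies n (Lb \<circ> flip_pt) (La \<circ> flip_pt) (K \<circ> flip_layer)"
  unfolding classifies_def
proof (intro allI)
  fix p q
  show "(K \<circ> flip_layer) p = (K \<circ> flip_layer) q \<longleftrightarrow>
      (p, q) \<in> joint_sim (labelled n (Lb \<circ> flip_pt)) (labelled n (La \<circ> flip_pt))"
    using classifiesD[OF assms, of "flip_layer p" "flip_layer q"] joint_sim_mirror_iff[of p q]
    by (simp add: mirror_labelled)
qed

lemma star_label_mirror:
  "star_label n (Lb \<circ> flip_pt) (La \<circ> flip_pt) (K \<circ> flip_layer) = star_label n La Lb K \<circ> flip_pt"
proof -
  have ball: "(\<forall>u\<in>carrierX n. P (flip_pt u)) \<longleftrightarrow> (\<forall>u\<in>carrierX n. P u)" for P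
    by (metis flip_pt_flip_pt flip_pt_in_carrierX)
  have "class_avoids_points n (Lb \<circ> flip_pt) (La \<circ> flip_pt) (K \<circ> flip_layer) k \<longleftrightarrow>
      (\<forall>u\<in>carrierX n. Lb (flip_pt u) = None \<longrightarrow> K (emb2 (flip_pt u)) \<noteq> k) \<and>
      (\<forall>u\<in>carrierX n. La (flip_pt u) = None \<longrightarrow> K (emb1 (flip_pt u)) \<noteq> k)" for k
    by (simp add: class_avoids_points_def)
  also have "\<dots> k \<longleftrightarrow> class_avoids_points n La Lb K k" for k
    using ball[of "\<lambda>u. Lb u = None \<longrightarrow> K (emb2 u) \<noteq> k"] ball[of "\<lambda>u. La u = None \<longrightarrow> K (emb1 u) \<noteq> k"]
    unfolding class_avoids_points_def by blast
  finally have "class_avoids_points n (Lb \<circ> flip_pt) (La \<circ> flip_pt) (K \<circ> flip_layer) k \<longleftrightarrow>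
      class_avoids_points n La Lb K k" for k .
  then show ?thesis
    by (simp add: fun_eq_iff star_label_def)
qed

lemma star_mirror:
  assumes "a \<in> PIstar n" "b \<in> PIstar n"
  shows "star n (mirror b) (mirror a) = mirror (star n a b)"
proof -
  obtain La :: "pt \<Rightarrow> pt set option" where La: "line_labelling n La" "a = labelled n La"
    using assms(1) by (rule PIstar_obtain_line_labelling)
  obtain Lb :: "pt \<Rightarrow> pt set option" where Lb: "line_labelling n Lb" "b = labelled n Lb"
    using assms(2) by (rule PIstar_obtain_line_labelling)
  let ?K = "joint_class a b"
  have K: "classifies n La Lb ?K"
    unfolding La(2) Lb(2) by (rule classifies_joint_class)
  have "star n (mirror b) (mirror a) = labelled n (star_label n (Lb \<circ> flip_pt) (La \<circ> flip_pt) (?K \<circ> flip_layer))"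
    unfolding La(2) Lb(2) mirror_labelled
    by (intro star_labelled line_labelling_comp_flip_pt La Lb classifies_mirror K[unfolded La(2) Lb(2)])
  also have "\<dots> = mirror (star n a b)"
    unfolding star_label_mirror La(2) Lb(2) star_labelled[OF La(1) Lb(1) K[unfolded La(2) Lb(2)]]
    by (simp add: mirror_labelled)
  finally show ?thesis .
qed

lemma mirror_in_PIstar: "P \<in> PIstar n \<Longrightarrow> mirror P \<in> PIstar n"
  by (metis PIstar_obtain_line_labelling mirror_labelled line_labelling_comp_flip_pt labelled_in_PIstar)

lemma star_label_Inl_reaches_Inr:
  assumes La: "line_labelling n La" and Lb: "line_labelling n Lb" and K: "classifies n La Lb K"
    and x: "x \<in> {1..n}" and ne: "star_label n La Lb K (Inl x) \<noteq> None"
  shows "\<exists>y\<in>{1..n}. star_label n La Lb K (Inr y) = star_label n La Lb K (Inl x)"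
proof -
  have avoid_a: "\<And>v. v \<in> carrierX n \<Longrightarrow> K (emb1 v) = K (x, 0) \<Longrightarrow> La v \<noteq> None"
    and avoid_b: "\<And>v. v \<in> carrierX n \<Longrightarrow> K (emb2 v) = K (x, 0) \<Longrightarrow> Lb v \<noteq> None"
    using ne unfolding star_label_def class_avoids_points_def by (auto split: if_splits)
  have "La (Inl x) \<noteq> None"
    using avoid_a[of "Inl x"] x by simp
  then obtain y1 where y1: "y1 \<in> {1..n}" "La (Inr y1) = La (Inl x)"
    using La x unfolding line_labelling_def by (metis Inl_in_carrierX)
  then have "(emb1 (Inl x), emb1 (Inr y1)) \<in> joint_sim (labelled n La) (labelled n Lb)"
    using \<open>La (Inl x) \<noteq> None\<close> x by (intro joint_sim_left_block) auto
  then have k1: "K (x, 0) = K (y1, 1)"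
    using classifiesD[OF K] by simp
  then have "Lb (Inl y1) \<noteq> None"
    using avoid_b[of "Inl y1"] y1 by simp
  then obtain y2 where y2: "y2 \<in> {1..n}" "Lb (Inr y2) = Lb (Inl y1)"
    using Lb y1 unfolding line_labelling_def by (metis Inl_in_carrierX)
  then have "(emb2 (Inl y1), emb2 (Inr y2)) \<in> joint_sim (labelled n La) (labelled n Lb)"
    using \<open>Lb (Inl y1) \<noteq> None\<close> y1 by (intro joint_sim_right_block) auto
  then have "K (y1, 1) = K (y2, 2)"
    using classifiesD[OF K] by simp
  then have "K (embo (Inr y2)) = K (embo (Inl x))"
    using k1 by simp
  then have "star_label n La Lb K (Inr y2) = star_label n La Lb K (Inl x)"
    unfolding star_label_def by simp
  then show ?thesis
    using y2(1) by blast
qed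

text \<open>The case of a lower point is the mirror image of the case of an upper point.\<close>

lemma line_labelling_star_label:
  assumes La: "line_labelling n La" and Lb: "line_labelling n Lb" and K: "classifies n La Lb K"
  shows "line_labelling n (star_label n La Lb K)"
  unfolding line_labelling_def
proof (intro ballI impI)
  let ?L = "star_label n La Lb K" and ?L' = "star_label n (Lb \<circ> flip_pt) (La \<circ> flip_pt) (K \<circ> flip_layer)"
  have mirrored: "?L' = ?L \<circ> flip_pt"
    by (rule star_label_mirror)
  fix u assume "u \<in> carrierX n" "?L u \<noteq> None"
  then consider x where "x \<in> {1..n}" "u = Inl x" | y where "y \<in> {1..n}" "u = Inr y"
    by (cases u) auto
  then show "(\<exists>x\<in>{1..n}. ?L (Inl x) = ?L u) \<and> (\<exists>y\<in>{1..n}. ?L (Inr y) = ?L u)"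
  proof cases
    case (1 x)
    then show ?thesis
      using star_label_Inl_reaches_Inr[OF La Lb K] \<open>?L u \<noteq> None\<close> by blast
  next
    case (2 y)
    then have "\<exists>x\<in>{1..n}. ?L' (Inr x) = ?L' (Inl y)"
      using \<open>?L u \<noteq> None\<close> mirrored
      by (intro star_label_Inl_reaches_Inr line_labelling_comp_flip_pt La Lb classifies_mirror K) simp_all
    then show ?thesis
      using 2 mirrored by auto
  qed
qed

lemma star_in_PIstar:
  assumes "a \<in> PIstar n" "b \<in> PIstar n"
  shows "star n a b \<in> PIstar n"
proof -
  obtain La :: "pt \<Rightarrow> pt set option" where La: "line_labelling n La" "a = labelled n La"
    using assms(1) by (rule PIstar_obtain_line_labelling)
  obtain Lb :: "pt \<Rightarrow> pt set option" where Lb: "line_labelling n Lb" "b = labelled n Lb"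
    using assms(2) by (rule PIstar_obtain_line_labelling)
  show ?thesis
    using star_labelled[OF La(1) Lb(1) classifies_joint_class]
      line_labelling_star_label[OF La(1) Lb(1) classifies_joint_class] La(2) Lb(2)
    by (simp add: labelled_in_PIstar)
qed

section \<open>Products with partial maps\<close>

definition pmap_label :: "nat set \<Rightarrow> (nat \<Rightarrow> nat) \<Rightarrow> pt \<Rightarrow> nat option" where
  "pmap_label D f u = (case u of
      Inl x \<Rightarrow> if x \<in> D then Some (f x) else None
    | Inr y \<Rightarrow> if y \<in> f ` D then Some y else None)"

definition pmap :: "nat \<Rightarrow> nat set \<Rightarrow> (nat \<Rightarrow> nat) \<Rightarrow> bpart" where
  "pmap n D f = labelled n (pmap_label D f)"

lemma pmap_label_Inl [simp]: "pmap_label D f (Inl x) = (if x \<in> D then Some (f x) else None)"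
  and pmap_label_Inr [simp]: "pmap_label D f (Inr y) = (if y \<in> f ` D then Some y else None)"
  by (simp_all add: pmap_label_def)

lemma line_labelling_pmap_label:
  assumes "D \<subseteq> {1..n}" "f ` D \<subseteq> {1..n}"
  shows "line_labelling n (pmap_label D f)"
  unfolding line_labelling_def
proof (intro ballI impI)
  fix u assume "u \<in> carrierX n" "pmap_label D f u \<noteq> None"
  then obtain x where "x \<in> D" "pmap_label D f u = Some (f x)"
    by (cases u) (auto split: if_splits)
  then show "(\<exists>x\<in>{1..n}. pmap_label D f (Inl x) = pmap_label D f u) \<and>
      (\<exists>y\<in>{1..n}. pmap_label D f (Inr y) = pmap_label D f u)"
    using assms by (intro conjI bexI[of _ x] bexI[of _ "f x"]) auto
qed

lemma pmap_in_PIstar: "D \<subseteq> {1..n} \<Longrightarrow> f ` D \<subseteq> {1..n} \<Longrightarrow> pmap n D f \<in> PIstar n"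
  unfolding pmap_def by (intro labelled_in_PIstar line_labelling_pmap_label)

lemma pmap_cong: "(\<And>x. x \<in> D \<Longrightarrow> f x = g x) \<Longrightarrow> pmap n D f = pmap n D g"
  unfolding pmap_def by (rule labelled_cong[where h = id]) (auto simp: pmap_label_def image_def split: sum.splits)

lemma pmap_eq_blocks:
  assumes "D \<subseteq> {1..n}" "f ` D \<subseteq> {1..n}"
  shows "pmap n D f = (\<lambda>y. insert (Inr y) (Inl ` {x \<in> D. f x = y})) ` f ` D
    \<union> (\<lambda>u. {u}) ` (Inl ` ({1..n} - D) \<union> Inr ` ({1..n} - f ` D))"
proof -
  have "{l. \<exists>u\<in>carrierX n. pmap_label D f u = Some l} = f ` D"
    using assms by (auto simp: ball_carrierX bex_carrierX)
  moreover have "{u \<in> carrierX n. pmap_label D f u = Some y} = insert (Inr y) (Inl ` {x \<in> D. f x = y})"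
    if "y \<in> f ` D" for y
    using assms that by (auto simp: carrierX_def split: if_splits)
  moreover have "{u \<in> carrierX n. pmap_label D f u = None} = Inl ` ({1..n} - D) \<union> Inr ` ({1..n} - f ` D)"
    by (auto simp: carrierX_def)
  ultimately show ?thesis
    unfolding pmap_def labelled_eq_level_sets by (metis (no_types, lifting) image_cong)
qed

fun lower_label :: "nat \<Rightarrow> (pt \<Rightarrow> 'c option) \<Rightarrow> nat \<times> nat \<Rightarrow> 'c option" where
  "lower_label n Lb (y, k) =
     (if y \<in> {1..n} \<and> k = 1 then Lb (Inl y) else if y \<in> {1..n} \<and> k = 2 then Lb (Inr y) else None)"

lemma lower_label_emb2 [simp]: "u \<in> carrierX n \<Longrightarrow> lower_label n Lb (emb2 u) = Lb u"
  by (cases u) auto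

lemma lower_label_SomeE:
  assumes "lower_label n Lb p = Some l"
  obtains u where "u \<in> carrierX n" "p = emb2 u" "Lb u = Some l"
proof -
  obtain y k where p: "p = (y, k)"
    by fastforce
  then consider "y \<in> {1..n}" "k = 1" "Lb (Inl y) = Some l" | "y \<in> {1..n}" "k = 2" "Lb (Inr y) = Some l"
    using assms by (auto split: if_splits)
  then show thesis
    using that[of "Inl y"] that[of "Inr y"] p by cases auto
qed

lemma lower_label_connected:
  assumes "lower_label n Lb p \<noteq> None" "lower_label n Lb p = lower_label n Lb q"
  shows "(p, q) \<in> joint_sim a (labelled n Lb)"
proof -
  obtain l where l: "lower_label n Lb p = Some l" "lower_label n Lb q = Some l"
    using assms by auto
  obtain u v where "u \<in> carrierX n" "p = emb2 u" "Lb u = Some l" "v \<in> carrierX n" "q = emb2 v" "Lb v = Some l"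
    using lower_label_SomeE[OF l(1)] lower_label_SomeE[OF l(2)] by metis
  then show ?thesis
    using joint_sim_right_block[of u n v Lb a] by simp
qed

definition pmap_push :: "nat set \<Rightarrow> (nat \<Rightarrow> nat) \<Rightarrow> nat \<times> nat \<Rightarrow> nat \<times> nat" where
  "pmap_push D f p = (if snd p = 0 \<and> fst p \<in> D then (f (fst p), 1) else p)"

lemma joint_sim_pmap_push:
  assumes "D \<subseteq> {1..n}" "f ` D \<subseteq> {1..n}"
  shows "(p, pmap_push D f p) \<in> joint_sim (pmap n D f) b"
proof (cases "snd p = 0 \<and> fst p \<in> D")
  case True
  then obtain x where p: "p = (x, 0)" "x \<in> D"
    by (cases p) auto
  then have "(emb1 (Inl x), emb1 (Inr (f x))) \<in> joint_sim (pmap n D f) b"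
    unfolding pmap_def using assms by (intro joint_sim_left_block) auto
  then show ?thesis
    using p by (simp add: pmap_push_def)
qed (auto simp: pmap_push_def)

lemma pmap_push_emb1: "pmap_label D f u = Some y \<Longrightarrow> pmap_push D f (emb1 u) = emb2 (Inl y)"
  by (cases u) (auto simp: pmap_push_def split: if_splits)

lemma pmap_push_emb2 [simp]: "pmap_push D f (emb2 u) = emb2 u"
  by (cases u) (simp_all add: pmap_push_def)

lemma classifies_pmap:
  assumes "D \<subseteq> {1..n}" "f ` D \<subseteq> {1..n}"
  shows "classifies n (pmap_label D f) Lb (label_class (lower_label n Lb) \<circ> pmap_push D f)"
proof (rule classifiesI)
  fix u v assume "u \<in> carrierX n" "v \<in> carrierX n" "pmap_label D f u \<noteq> None" "pmap_label D f v = pmap_label D f u"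
  then show "(label_class (lower_label n Lb) \<circ> pmap_push D f) (emb1 u) =
      (label_class (lower_label n Lb) \<circ> pmap_push D f) (emb1 v)"
    by (auto simp: pmap_push_emb1)
next
  fix u v assume "u \<in> carrierX n" "v \<in> carrierX n" "Lb u \<noteq> None" "Lb v = Lb u"
  then show "(label_class (lower_label n Lb) \<circ> pmap_push D f) (emb2 u) =
      (label_class (lower_label n Lb) \<circ> pmap_push D f) (emb2 v)"
    by (simp add: label_class_eq_iff)
next
  fix p q assume "(label_class (lower_label n Lb) \<circ> pmap_push D f) p =
      (label_class (lower_label n Lb) \<circ> pmap_push D f) q"
  then have eq: "label_class (lower_label n Lb) (pmap_push D f p) = label_class (lower_label n Lb) (pmap_push D f q)"
    by simp
  have push: "(p', pmap_push D f p') \<in> joint_sim (labelled n (pmap_label D f)) (labelled n Lb)" for p'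
    using joint_sim_pmap_push[OF assms] unfolding pmap_def .
  show "(p, q) \<in> joint_sim (labelled n (pmap_label D f)) (labelled n Lb)"
    by (rule joint_sim_if_label_class_eq[OF push lower_label_connected eq])
qed

text \<open>In \<open>pmap n D f \<star> b\<close> a block of \<open>b\<close> survives iff all its upper points lie in \<open>f ` D\<close>;
  it is then pulled back along \<open>f\<close>.\<close>

definition survives :: "nat \<Rightarrow> nat set \<Rightarrow> (nat \<Rightarrow> nat) \<Rightarrow> (pt \<Rightarrow> 'c option) \<Rightarrow> 'c \<Rightarrow> bool" where
  "survives n D f Lb l \<longleftrightarrow> (\<forall>y\<in>{1..n}. Lb (Inl y) = Some l \<longrightarrow> y \<in> f ` D)"

definition pullback_label :: "nat set \<Rightarrow> (nat \<Rightarrow> nat) \<Rightarrow> (pt \<Rightarrow> 'c option) \<Rightarrow> pt \<Rightarrow> 'c option" where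
  "pullback_label D f Lb u = (case u of Inl x \<Rightarrow> if x \<in> D then Lb (Inl (f x)) else None | Inr y \<Rightarrow> Lb (Inr y))"

definition pull_label :: "nat \<Rightarrow> nat set \<Rightarrow> (nat \<Rightarrow> nat) \<Rightarrow> (pt \<Rightarrow> 'c option) \<Rightarrow> pt \<Rightarrow> 'c option" where
  "pull_label n D f Lb u =
     (case pullback_label D f Lb u of Some l \<Rightarrow> if survives n D f Lb l then Some l else None | None \<Rightarrow> None)"

lemma class_avoids_points_pmap:
  "class_avoids_points n (pmap_label D f) Lb (label_class (lower_label n Lb) \<circ> pmap_push D f) (Inl l)
     \<longleftrightarrow> survives n D f Lb l"
proof -
  let ?K = "label_class (lower_label n Lb) \<circ> pmap_push D f"
  have "?K (emb1 (Inl x)) \<noteq> Inl l" if "x \<notin> D" for x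
    using that by (simp add: pmap_push_def)
  moreover have "?K (emb1 (Inr y)) = Inl l \<longleftrightarrow> Lb (Inl y) = Some l" if "y \<in> {1..n}" for y
    using that by (simp add: pmap_push_def label_class_def split: option.splits)
  ultimately have "(\<forall>u\<in>carrierX n. pmap_label D f u = None \<longrightarrow> ?K (emb1 u) \<noteq> Inl l) \<longleftrightarrow>
      survives n D f Lb l"
    unfolding survives_def ball_carrierX by auto
  moreover have "\<forall>u\<in>carrierX n. Lb u = None \<longrightarrow> ?K (emb2 u) \<noteq> Inl l"
    by simp
  ultimately show ?thesis
    unfolding class_avoids_points_def by blast
qed

lemma lower_label_pmap_push_embo:
  assumes "f ` D \<subseteq> {1..n}" "u \<in> carrierX n"
  shows "lower_label n Lb (pmap_push D f (embo u)) = pullback_label D f Lb u"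
  using assms by (cases u) (auto simp: pmap_push_def pullback_label_def)

lemma star_label_pmap_None:
  assumes "f ` D \<subseteq> {1..n}" "u \<in> carrierX n" "pullback_label D f Lb u = None"
  shows "star_label n (pmap_label D f) Lb (label_class (lower_label n Lb) \<circ> pmap_push D f) u = None"
proof -
  let ?K = "label_class (lower_label n Lb) \<circ> pmap_push D f"
  show ?thesis
  proof (cases u)
    case (Inl x)
    show ?thesis
    proof (cases "x \<in> D")
      case True
      then have "?K (embo u) = ?K (emb2 (Inl (f x)))" "Lb (Inl (f x)) = None"
        using assms Inl by (auto simp: pmap_push_def pullback_label_def)
      then show ?thesis
        using assms(1) True by (intro star_label_right_point[of "Inl (f x)"]) (auto simp: pmap_push_def)
    next
      case False
      then show ?thesis
        using Inl assms(2) by (intro star_label_left_point[of u]) auto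
    qed
  next
    case (Inr y)
    then have "?K (embo u) = ?K (emb2 u)" "Lb u = None"
      using assms by (simp_all add: pullback_label_def)
    then show ?thesis
      using assms(2) by (intro star_label_right_point) auto
  qed
qed

lemma star_pmap_labelled:
  assumes D: "D \<subseteq> {1..n}" "f ` D \<subseteq> {1..n}" and Lb: "line_labelling n Lb"
  shows "star n (pmap n D f) (labelled n Lb) = labelled n (pull_label n D f Lb)"
proof -
  let ?K = "label_class (lower_label n Lb) \<circ> pmap_push D f"
  let ?L = "star_label n (pmap_label D f) Lb ?K"
  have "star n (pmap n D f) (labelled n Lb) = labelled n ?L"
    unfolding pmap_def using line_labelling_pmap_label[OF D] Lb classifies_pmap[OF D]
    by (rule star_labelled)
  also have "\<dots> = labelled n (pull_label n D f Lb)"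
  proof (rule labelled_cong[where h = Inl])
    fix u assume u: "u \<in> carrierX n"
    show "?L u = map_option Inl (pull_label n D f Lb u)"
    proof (cases "pullback_label D f Lb u")
      case None
      then show ?thesis
        using star_label_pmap_None[OF D(2) u] by (simp add: pull_label_def)
    next
      case (Some l)
      then have "?K (embo u) = Inl l"
        using lower_label_pmap_push_embo[OF D(2) u, of Lb] by simp
      then show ?thesis
        using Some class_avoids_points_pmap[of n D f Lb l] by (simp add: star_label_def pull_label_def)
    qed
  qed simp
  finally show ?thesis .
qed

lemma star_pmap:
  assumes D: "D \<subseteq> {1..n}" "f ` D \<subseteq> {1..n}" and E: "E \<subseteq> {1..n}" "h ` E \<subseteq> {1..n}"
  shows "star n (pmap n D f) (pmap n E h) =
    pmap n {x \<in> D. f x \<in> E \<and> (\<forall>y\<in>E. h y = h (f x) \<longrightarrow> y \<in> f ` D)} (h \<circ> f)"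
proof -
  let ?D = "{x \<in> D. f x \<in> E \<and> (\<forall>y\<in>E. h y = h (f x) \<longrightarrow> y \<in> f ` D)}"
  have survives: "survives n D f (pmap_label E h) z \<longleftrightarrow> (\<forall>y\<in>E. h y = z \<longrightarrow> y \<in> f ` D)" for z
    using E(1) unfolding survives_def by auto
  have image: "z \<in> (h \<circ> f) ` ?D \<longleftrightarrow> z \<in> h ` E \<and> (\<forall>y\<in>E. h y = z \<longrightarrow> y \<in> f ` D)" for z
    by (auto simp: image_iff)
  have "star n (pmap n D f) (pmap n E h) = labelled n (pull_label n D f (pmap_label E h))"
    unfolding pmap_def[of n E h] using D line_labelling_pmap_label[OF E] by (rule star_pmap_labelled)
  also have "\<dots> = pmap n ?D (h \<circ> f)"
    unfolding pmap_def
  proof (rule labelled_cong[where h = id])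
    fix u assume "u \<in> carrierX n"
    show "pull_label n D f (pmap_label E h) u = map_option id (pmap_label ?D (h \<circ> f) u)"
      by (cases u) (auto simp: pull_label_def pullback_label_def survives image option.map_id)
  qed simp
  finally show ?thesis .
qed

lemma star_pmap_bij_left:
  assumes "bij_betw \<pi> {1..n} {1..n}" "E \<subseteq> {1..n}" "h ` E \<subseteq> {1..n}"
  shows "star n (pmap n {1..n} \<pi>) (pmap n E h) = pmap n {x \<in> {1..n}. \<pi> x \<in> E} (h \<circ> \<pi>)"
proof -
  have "\<pi> ` {1..n} = {1..n}"
    using assms(1) by (simp add: bij_betw_def)
  then show ?thesis
    using star_pmap[of "{1..n}" n \<pi> E h] assms(2,3) by (simp add: subset_iff)
qed

lemma star_pmap_bij_right:
  assumes "D \<subseteq> {1..n}" "f ` D \<subseteq> {1..n}" "bij_betw \<pi> {1..n} {1..n}"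
  shows "star n (pmap n D f) (pmap n {1..n} \<pi>) = pmap n D (\<pi> \<circ> f)"
proof -
  have "{x \<in> D. f x \<in> {1..n} \<and> (\<forall>y\<in>{1..n}. \<pi> y = \<pi> (f x) \<longrightarrow> y \<in> f ` D)} = D"
    using assms by (auto simp: bij_betw_def dest: inj_onD)
  then show ?thesis
    using star_pmap[of D n f "{1..n}" \<pi>] assms by (simp add: bij_betw_def)
qed

lemma star_pmap_id:
  assumes "A \<subseteq> {1..n}" "B \<subseteq> {1..n}"
  shows "star n (pmap n A id) (pmap n B id) = pmap n (A \<inter> B) id"
proof -
  have "{x \<in> A. id x \<in> B \<and> (\<forall>y\<in>B. id y = id (id x) \<longrightarrow> y \<in> id ` A)} = A \<inter> B"
    by auto
  then show ?thesis
    using star_pmap[of A n id B id] assms by simp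
qed

lemma star_pmap_merge:
  assumes "D \<subseteq> {1..n}" "g ` D \<subseteq> {1..n}" "a \<in> g ` D" "b \<in> g ` D"
  shows "star n (pmap n D g) (pmap n {1..n} (id(b := a))) = pmap n D (id(b := a) \<circ> g)"
proof -
  have "{x \<in> D. g x \<in> {1..n} \<and> (\<forall>y\<in>{1..n}. (id(b := a)) y = (id(b := a)) (g x) \<longrightarrow> y \<in> g ` D)} = D"
    using assms by (auto split: if_splits)
  moreover have "id(b := a) ` {1..n} \<subseteq> {1..n}"
    using assms by auto
  ultimately show ?thesis
    using star_pmap[of D n g "{1..n}" "id(b := a)"] assms(1,2) by simp
qed

lemma unit_eq_pmap:
  assumes "bij_betw \<pi> {1..n} {1..n}"
  shows "(\<lambda>x. {Inl x, Inr (\<pi> x)}) ` {1..n} = pmap n {1..n} \<pi>"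
proof -
  have "{x' \<in> {1..n}. \<pi> x' = \<pi> x} = {x}" if "x \<in> {1..n}" for x
    using that assms by (auto simp: bij_betw_def dest: inj_onD)
  then have "(\<lambda>y. insert (Inr y) (Inl ` {x \<in> {1..n}. \<pi> x = y})) ` \<pi> ` {1..n} = (\<lambda>x. {Inl x, Inr (\<pi> x)}) ` {1..n}"
    unfolding image_image by (intro image_cong) auto
  then show ?thesis
    using assms by (simp add: pmap_eq_blocks bij_betw_def)
qed

lemma gamma12_eq_pmap:
  assumes "n \<ge> 3"
  shows "gamma12 n = pmap n {1..n} (id(2 := 1))"
proof -
  let ?c = "id(2 := 1) :: nat \<Rightarrow> nat"
  have image: "?c ` {1..n} = insert 1 {3..n}"
    using assms by (auto simp: image_iff)
  have "{x \<in> {1..n}. ?c x = 1} = {1, 2}"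
    using assms by auto
  moreover have "{x \<in> {1..n}. ?c x = t} = {t}" if "t \<in> {3..n}" for t
    using that by auto
  ultimately have blocks: "(\<lambda>y. insert (Inr y) (Inl ` {x \<in> {1..n}. ?c x = y})) ` insert 1 {3..n} =
      insert {Inl 1, Inl 2, Inr 1} ((\<lambda>t. {Inl t, Inr t}) ` {3..n})"
    by (auto intro!: image_cong)
  have points: "{1..n} - insert 1 {3..n} = {2::nat}"
    using assms by auto
  have sub: "?c ` {1..n} \<subseteq> {1..n}"
    using image assms by auto
  have "pmap n {1..n} ?c = (\<lambda>y. insert (Inr y) (Inl ` {x \<in> {1..n}. ?c x = y})) ` insert 1 {3..n}
      \<union> (\<lambda>u. {u}) ` (Inl ` ({1..n} - {1..n}) \<union> Inr ` ({1..n} - insert 1 {3..n}))"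
    by (simp only: pmap_eq_blocks[OF order_refl sub] image)
  also have "\<dots> = insert {Inl 1, Inl 2, Inr 1} ((\<lambda>t. {Inl t, Inr t}) ` {3..n}) \<union> {{Inr 2}}"
    unfolding blocks points by simp
  finally show ?thesis
    unfolding gamma12_def by blast
qed

lemma gamma12_inv_eq_mirror: "gamma12_inv n = mirror (gamma12 n)"
  unfolding gamma12_def gamma12_inv_def mirror_def by (simp add: image_image insert_commute)

lemma mirror_unit:
  assumes "P \<in> units n"
  shows "mirror P \<in> units n"
proof -
  obtain \<pi> where \<pi>: "bij_betw \<pi> {1..n} {1..n}" "P = (\<lambda>x. {Inl x, Inr (\<pi> x)}) ` {1..n}"
    using assms by (auto simp: units_def)
  let ?\<rho> = "inv_into {1..n} \<pi>"
  have "mirror P = (\<lambda>x. {Inl (\<pi> x), Inr x}) ` {1..n}"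
    unfolding \<pi>(2) mirror_def by (simp add: image_image insert_commute)
  also have "\<dots> = (\<lambda>y. {Inl y, Inr (?\<rho> y)}) ` \<pi> ` {1..n}"
    unfolding image_image using \<pi>(1) by (intro image_cong) (auto simp: bij_betw_def)
  finally show ?thesis
    using \<pi>(1) bij_betw_inv_into[OF \<pi>(1)] by (auto simp: units_def bij_betw_def)
qed

lemma gamma12_labelled:
  assumes "n \<ge> 3"
  shows "gamma12 n = labelled n (pmap_label {1..n} (id(2 := 1)))"
    and "gamma12_inv n = labelled n (pmap_label {1..n} (id(2 := 1)) \<circ> flip_pt)"
  using gamma12_eq_pmap[OF assms] gamma12_inv_eq_mirror by (simp_all add: pmap_def mirror_labelled)

text \<open>In \<open>gamma12_inv n \<star> gamma12 n\<close> the singletons \<open>{2}\<close> and \<open>{2'}\<close> of the factors survive,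
  while every other point lies in the class of the middle point \<open>x''\<close>, resp. \<open>1''\<close> for \<open>x = 2\<close>;
  these middle points label the classes.\<close>

definition gamma_layers_label :: "nat \<Rightarrow> nat \<times> nat \<Rightarrow> nat option" where
  "gamma_layers_label n p =
     (if fst p \<in> {1..n} \<and> snd p \<le> 2 \<and> (fst p = 2 \<longrightarrow> snd p = 1) then Some ((id(2 := 1)) (fst p)) else None)"

lemma gamma_layers_label_emb:
  assumes "n \<ge> 3" "u \<in> carrierX n"
  shows "gamma_layers_label n (emb1 u) = (pmap_label {1..n} (id(2 := 1)) \<circ> flip_pt) u"
    and "gamma_layers_label n (emb2 u) = pmap_label {1..n} (id(2 := 1)) u"
proof -
  have "id(2 := 1) ` {1..n} = {1..n} - {2::nat}"
    using assms(1) by (auto simp: image_iff)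
  then show "gamma_layers_label n (emb1 u) = (pmap_label {1..n} (id(2 := 1)) \<circ> flip_pt) u"
    and "gamma_layers_label n (emb2 u) = pmap_label {1..n} (id(2 := 1)) u"
    using assms(2) by (cases u; auto simp: gamma_layers_label_def)+
qed

lemma joint_sim_gamma_layers_label:
  assumes n: "n \<ge> 3" and p: "gamma_layers_label n p = Some l"
  shows "(p, (l, 1)) \<in> joint_sim (gamma12_inv n) (gamma12 n)"
proof -
  let ?M = "gamma_layers_label n"
  have left: "(emb1 v, emb1 w) \<in> joint_sim (gamma12_inv n) (gamma12 n)"
    if "v \<in> carrierX n" "w \<in> carrierX n" "?M (emb1 v) = Some l'" "?M (emb1 w) = Some l'" for v w l'
    using that gamma_layers_label_emb(1)[OF n] unfolding gamma12_labelled[OF n]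
    by (intro joint_sim_left_block) auto
  have right: "(emb2 v, emb2 w) \<in> joint_sim (gamma12_inv n) (gamma12 n)"
    if "v \<in> carrierX n" "w \<in> carrierX n" "?M (emb2 v) = Some l'" "?M (emb2 w) = Some l'" for v w l'
    using that gamma_layers_label_emb(2)[OF n] unfolding gamma12_labelled[OF n]
    by (intro joint_sim_right_block) auto
  obtain x k where x: "p = (x, k)" "x \<in> {1..n}" "x = 2 \<longrightarrow> k = 1" "l = (id(2 := 1)) x" and "k \<le> 2"
    using p by (cases p) (auto simp: gamma_layers_label_def split: if_splits)
  then consider "k = 0" | "k = 1" "x = 2" | "k = 1" "x \<noteq> 2" | "k = 2"
    by linarith
  then show ?thesis
  proof cases
    case 1
    then show ?thesis
      using left[of "Inl x" "Inr x" x] x by (simp add: gamma_layers_label_def)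
  next
    case 2
    then show ?thesis
      using left[of "Inr 2" "Inr 1" 1] x n by (simp add: gamma_layers_label_def)
  next
    case 4
    then show ?thesis
      using right[of "Inr x" "Inl x" x] x by (simp add: gamma_layers_label_def)
  qed (use x in simp)
qed

lemma classifies_gamma_layers_label:
  assumes n: "n \<ge> 3"
  shows "classifies n (pmap_label {1..n} (id(2 := 1)) \<circ> flip_pt) (pmap_label {1..n} (id(2 := 1)))
    (label_class (gamma_layers_label n))"
proof (rule classifiesI)
  fix p q assume eq: "label_class (gamma_layers_label n) p = label_class (gamma_layers_label n) q"
  have connected: "(p, q) \<in> joint_sim (gamma12_inv n) (gamma12 n)"
    if "gamma_layers_label n p \<noteq> None" "gamma_layers_label n p = gamma_layers_label n q" for p q
    using that joint_sim_gamma_layers_label[OF n] joint_sim_sym joint_sim_trans by (metis option.exhaust)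
  from eq have "p = q \<or> (gamma_layers_label n p \<noteq> None \<and> gamma_layers_label n p = gamma_layers_label n q)"
    by (simp add: label_class_eq_iff)
  then show "(p, q) \<in> joint_sim (labelled n (pmap_label {1..n} (id(2 := 1)) \<circ> flip_pt))
      (labelled n (pmap_label {1..n} (id(2 := 1))))"
    unfolding gamma12_labelled[OF n, symmetric] by (elim disjE conjE) (simp, rule connected)
qed (simp_all add: gamma_layers_label_emb[OF n] label_class_eq_iff)

lemma gamma12_inv_star_gamma12:
  assumes n: "n \<ge> 3"
  shows "star n (gamma12_inv n) (gamma12 n) = pmap n ({1..n} - {2}) id"
proof -
  let ?Lb = "pmap_label {1..n} (id(2 := 1))" and ?M = "gamma_layers_label n"
  let ?La = "?Lb \<circ> flip_pt" and ?K = "label_class ?M"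
  have Lb: "line_labelling n ?Lb"
    using n by (intro line_labelling_pmap_label) auto
  have "star n (gamma12_inv n) (gamma12 n) = labelled n (star_label n ?La ?Lb ?K)"
    unfolding gamma12_labelled[OF n]
    using line_labelling_comp_flip_pt[OF Lb] Lb classifies_gamma_layers_label[OF n] by (rule star_labelled)
  also have "\<dots> = pmap n ({1..n} - {2}) id"
    unfolding pmap_def
  proof (rule labelled_cong[where h = Inl])
    fix u assume u: "u \<in> carrierX n"
    have embo: "?M (embo u) = pmap_label ({1..n} - {2}) id u"
      using u by (cases u) (auto simp: gamma_layers_label_def)
    show "star_label n ?La ?Lb ?K u = map_option Inl (pmap_label ({1..n} - {2}) id u)"
    proof (cases "?M (embo u)")
      case None
      have "star_label n ?La ?Lb ?K u = None"
      proof (cases u)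
        case (Inl x)
        then have "?La u = None" "?K (embo u) = ?K (emb1 u)"
          using None gamma_layers_label_emb(1)[OF n u] by simp_all
        then show ?thesis
          by (rule star_label_left_point[OF u])
      next
        case (Inr y)
        then have "?Lb u = None" "?K (embo u) = ?K (emb2 u)"
          using None gamma_layers_label_emb(2)[OF n u] by simp_all
        then show ?thesis
          by (rule star_label_right_point[OF u])
      qed
      then show ?thesis
        using None embo by simp
    next
      case (Some l)
      have "class_avoids_points n ?La ?Lb ?K (Inl l)"
        unfolding class_avoids_points_def using gamma_layers_label_emb[OF n] by auto
      then show ?thesis
        using Some embo by (simp add: star_label_def)
    qed
  qed simp
  finally show ?thesis .
qed

section \<open>Generation\<close>

abbreviation generated :: "nat \<Rightarrow> bpart set" where
  "generated n \<equiv> semigen n (units n \<union> {gamma12 n, gamma12_inv n})"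

lemma units_subset_PIstar:
  assumes "P \<in> units n"
  shows "P \<in> PIstar n"
proof -
  obtain \<pi> where \<pi>: "bij_betw \<pi> {1..n} {1..n}" "P = (\<lambda>x. {Inl x, Inr (\<pi> x)}) ` {1..n}"
    using assms by (auto simp: units_def)
  then show ?thesis
    using unit_eq_pmap[OF \<pi>(1)] pmap_in_PIstar[of "{1..n}" n \<pi>] by (simp add: bij_betw_def)
qed

lemma generated_subset_PIstar:
  assumes "n \<ge> 3" "P \<in> generated n"
  shows "P \<in> PIstar n"
  using assms(2)
proof induction
  case (base a)
  have "gamma12 n \<in> PIstar n"
    unfolding gamma12_eq_pmap[OF assms(1)] by (rule pmap_in_PIstar) auto
  then show ?case
    using base units_subset_PIstar by (auto simp: gamma12_inv_eq_mirror mirror_in_PIstar)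
qed (rule star_in_PIstar)

lemma mirror_generated:
  assumes "n \<ge> 3" "P \<in> generated n"
  shows "mirror P \<in> generated n"
  using assms(2)
proof induction
  case (base a)
  then show ?case
    using mirror_unit by (auto simp: gamma12_inv_eq_mirror intro: semigen.base)
next
  case (prod a b)
  then show ?case
    using star_mirror[OF generated_subset_PIstar[OF assms(1) prod.hyps(1)]
        generated_subset_PIstar[OF assms(1) prod.hyps(2)]]
    by (metis semigen.prod)
qed

lemma pmap_bij_generated:
  assumes "bij_betw \<pi> {1..n} {1..n}"
  shows "pmap n {1..n} \<pi> \<in> generated n"
proof -
  have "pmap n {1..n} \<pi> \<in> units n"
    unfolding units_def using assms unit_eq_pmap[OF assms] by blast
  then show ?thesis
    by (simp add: semigen.base)
qed

lemma pmap_restriction_generated: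
  assumes "n \<ge> 3" "j \<in> {1..n}"
  shows "pmap n ({1..n} - {j}) id \<in> generated n"
proof -
  let ?X = "{1..n}" and ?t = "Transposition.transpose 2 j"
  have t: "bij_betw ?t ?X ?X"
    using assms by simp
  have "?t x \<in> ?X" if "x \<in> ?X" for x
    using that assms by (simp add: transpose_def)
  moreover have "?t x = 2 \<longleftrightarrow> x = j" for x
    by (auto simp: transpose_eq_iff)
  ultimately have "{x \<in> ?X. ?t x \<in> ?X - {2}} = ?X - {j}"
    by blast
  then have move: "star n (pmap n ?X ?t) (pmap n (?X - {2}) id) = pmap n (?X - {j}) ?t"
    using star_pmap_bij_left[OF t, of "?X - {2}" id] by simp
  have "star n (gamma12_inv n) (gamma12 n) \<in> generated n"
    by (intro semigen.prod semigen.base) auto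
  then have "pmap n (?X - {2}) id \<in> generated n"
    unfolding gamma12_inv_star_gamma12[OF assms(1)] .
  then have "pmap n (?X - {j}) ?t \<in> generated n"
    using pmap_bij_generated[OF t] semigen.prod move by metis
  then have "star n (pmap n (?X - {j}) ?t) (pmap n ?X ?t) \<in> generated n"
    using pmap_bij_generated[OF t] by (rule semigen.prod)
  also have "star n (pmap n (?X - {j}) ?t) (pmap n ?X ?t) = pmap n (?X - {j}) id"
    using star_pmap_bij_right[OF _ _ t, of "?X - {j}" ?t] t by (auto simp: bij_betw_def intro: pmap_cong)
  finally show ?thesis .
qed

lemma pmap_id_generated:
  assumes "n \<ge> 3" "S \<subseteq> {1..n}"
  shows "pmap n S id \<in> generated n"
proof -
  have "pmap n ({1..n} - T) id \<in> generated n" if "T \<subseteq> {1..n}" for T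
    using finite_subset[OF that finite_atLeastAtMost] that
  proof (induction T)
    case empty
    show ?case
      using pmap_bij_generated[OF bij_betw_id] unfolding id_def by simp
  next
    case (insert j T)
    then have "j \<in> {1..n}" "T \<subseteq> {1..n}"
      by simp_all
    then have "star n (pmap n ({1..n} - {j}) id) (pmap n ({1..n} - T) id) \<in> generated n"
      using pmap_restriction_generated[OF assms(1)] insert.IH by (intro semigen.prod)
    moreover have "({1..n} - {j}) \<inter> ({1..n} - T) = {1..n} - insert j T"
      by auto
    ultimately show ?case
      using star_pmap_id[of "{1..n} - {j}" n "{1..n} - T"] unfolding id_def by auto
  qed
  from this[of "{1..n} - S"] show ?thesis
    using assms(2) by (simp add: double_diff)
qed

lemma pmap_inj_generated:
  assumes "n \<ge> 3" "D \<subseteq> {1..n}" "f ` D \<subseteq> {1..n}" "inj_on f D"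
  shows "pmap n D f \<in> generated n"
proof -
  obtain \<pi> where \<pi>: "bij_betw \<pi> {1..n} {1..n}" "\<And>x. x \<in> D \<Longrightarrow> \<pi> x = f x"
    using inj_on_extends_to_bij_betw[OF finite_atLeastAtMost assms(2-4)] by blast
  have "star n (pmap n D id) (pmap n {1..n} \<pi>) \<in> generated n"
    using pmap_id_generated[OF assms(1,2)] pmap_bij_generated[OF \<pi>(1)] by (rule semigen.prod)
  also have "star n (pmap n D id) (pmap n {1..n} \<pi>) = pmap n D \<pi>"
    using star_pmap_bij_right[of D n id, OF assms(2) _ \<pi>(1)] assms(2) by simp
  also have "\<dots> = pmap n D f"
    using \<pi>(2) by (rule pmap_cong)
  finally show ?thesis .
qed

text \<open>Conjugating \<open>gamma12 n = pmap n {1..n} (id(2 := 1))\<close> by a permutation sending \<open>a, b\<close> to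
  \<open>1, 2\<close> merges any two points.\<close>

lemma pmap_merge_generated:
  assumes "n \<ge> 3" "a \<in> {1..n}" "b \<in> {1..n}" "a \<noteq> b"
  shows "pmap n {1..n} (id(b := a)) \<in> generated n"
proof -
  let ?X = "{1..n}" and ?c = "id(2 := 1) :: nat \<Rightarrow> nat"
  obtain \<sigma> where "bij_betw \<sigma> ?X ?X" and \<sigma>ab: "\<And>x. x \<in> {a, b} \<Longrightarrow> \<sigma> x = (if x = a then 1 else 2)"
    by (rule inj_on_extends_to_bij_betw[of ?X "{a, b}" "\<lambda>x. if x = a then 1 else 2"])
      (use assms in \<open>auto simp: inj_on_def\<close>)
  then have \<sigma>: "bij_betw \<sigma> ?X ?X" "\<sigma> a = 1" "\<sigma> b = 2"
    using assms(4) by auto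
  let ?\<sigma>' = "inv_into ?X \<sigma>"
  have \<sigma>': "bij_betw ?\<sigma>' ?X ?X"
    using \<sigma>(1) by (rule bij_betw_inv_into)
  have c\<sigma>: "(?c \<circ> \<sigma>) ` ?X \<subseteq> ?X"
    using \<sigma>(1) assms(1) by (auto simp: bij_betw_def)
  have "star n (pmap n ?X \<sigma>) (gamma12 n) \<in> generated n"
    using pmap_bij_generated[OF \<sigma>(1)] by (auto intro: semigen.prod semigen.base)
  also have "{x \<in> ?X. \<sigma> x \<in> ?X} = ?X"
    using bij_betw_apply[OF \<sigma>(1)] by blast
  then have "star n (pmap n ?X \<sigma>) (gamma12 n) = pmap n ?X (?c \<circ> \<sigma>)"
    unfolding gamma12_eq_pmap[OF assms(1)] using star_pmap_bij_left[OF \<sigma>(1), of ?X ?c] assms(1)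
    by (auto simp: subset_iff)
  finally have "star n (pmap n ?X (?c \<circ> \<sigma>)) (pmap n ?X ?\<sigma>') \<in> generated n"
    using pmap_bij_generated[OF \<sigma>'] by (rule semigen.prod)
  also have "star n (pmap n ?X (?c \<circ> \<sigma>)) (pmap n ?X ?\<sigma>') = pmap n ?X (?\<sigma>' \<circ> ?c \<circ> \<sigma>)"
    using star_pmap_bij_right[OF order_refl c\<sigma> \<sigma>'] by (simp add: comp_assoc)
  also have "\<dots> = pmap n ?X (id(b := a))"
  proof (rule pmap_cong)
    fix x assume x: "x \<in> ?X"
    have inv: "?\<sigma>' (\<sigma> y) = y" if "y \<in> ?X" for y
      using \<sigma>(1) that by (simp add: bij_betw_def)
    show "(?\<sigma>' \<circ> ?c \<circ> \<sigma>) x = (id(b := a)) x"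
    proof (cases "x = b")
      case True
      then show ?thesis
        using \<sigma> inv[OF assms(2)] by simp
    next
      case False
      then have "\<sigma> x \<noteq> 2"
        using \<sigma> x assms(3) by (metis bij_betw_def inj_onD)
      then show ?thesis
        using False inv[OF x] by simp
    qed
  qed
  finally show ?thesis .
qed

lemma pmap_eq_star_merge:
  assumes "D \<subseteq> {1..n}" "f ` D \<subseteq> {1..n}" "\<not> inj_on f D"
  obtains g a w where "g ` D \<subseteq> {1..n}" "card (f ` D) < card (g ` D)" "a \<in> {1..n}" "w \<in> {1..n}" "a \<noteq> w"
    "pmap n D f = star n (pmap n D g) (pmap n {1..n} (id(w := a)))"
proof -
  obtain x1 x2 where x12: "x1 \<in> D" "x2 \<in> D" "x1 \<noteq> x2" "f x1 = f x2"
    using assms(3) by (auto simp: inj_on_def)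
  obtain w where w: "w \<in> {1..n}" "w \<notin> f ` D"
    using not_inj_on_obtain_non_value[OF finite_atLeastAtMost assms(1,3)] .
  have fin: "finite D"
    using assms(1) finite_subset by blast
  define g where "g = f(x2 := w)"
  have "f x \<in> f ` (D - {x2})" if "x \<in> D" for x
  proof (cases "x = x2")
    case True
    then show ?thesis
      using x12 by (intro image_eqI[of _ f x1]) auto
  qed (use that in auto)
  then have "f ` D = f ` (D - {x2})"
    by auto
  moreover have "g ` D = insert w (f ` (D - {x2}))"
    using x12(2) by (auto simp: g_def image_iff)
  ultimately have gD: "g ` D = insert w (f ` D)"
    by simp
  have "star n (pmap n D g) (pmap n {1..n} (id(w := f x1))) = pmap n D (id(w := f x1) \<circ> g)"
    using assms(1,2) gD w(1) x12 by (intro star_pmap_merge) (auto simp: g_def image_iff)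
  also have "\<dots> = pmap n D f"
    using x12 w(2) by (intro pmap_cong) (auto simp: g_def)
  finally have "star n (pmap n D g) (pmap n {1..n} (id(w := f x1))) = pmap n D f" .
  moreover have "f x1 \<in> {1..n}" "f x1 \<noteq> w"
    using assms(2) x12(1) w(2) by auto
  moreover have "card (g ` D) = Suc (card (f ` D))"
    using gD w(2) fin by simp
  ultimately show ?thesis
    using that[of g "f x1" w] gD w(1) assms(2) by simp
qed

lemma pmap_generated:
  assumes "n \<ge> 3" "D \<subseteq> {1..n}" "f ` D \<subseteq> {1..n}"
  shows "pmap n D f \<in> generated n"
  using assms(3)
proof (induction "card D - card (f ` D)" arbitrary: f rule: less_induct)
  case less
  show ?case
  proof (cases "inj_on f D")
    case True
    then show ?thesis
      using pmap_inj_generated assms(1,2) less.prems by blast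
  next
    case False
    then obtain g a w where g: "g ` D \<subseteq> {1..n}" "card (f ` D) < card (g ` D)"
      and merge: "a \<in> {1..n}" "w \<in> {1..n}" "a \<noteq> w"
      and f: "pmap n D f = star n (pmap n D g) (pmap n {1..n} (id(w := a)))"
      using pmap_eq_star_merge[OF assms(2) less.prems] by blast
    have "card (g ` D) \<le> card D"
      using assms(2) finite_subset card_image_le by blast
    then have "pmap n D g \<in> generated n"
      using g by (intro less.hyps) auto
    then show ?thesis
      unfolding f using pmap_merge_generated[OF assms(1) merge] by (rule semigen.prod)
  qed
qed

text \<open>The two factors send the upper, resp. lower, points to the labels of their blocks.\<close>

lemma labelled_factorization:
  assumes L: "line_labelling n L" and labels: "\<And>u l. u \<in> carrierX n \<Longrightarrow> L u = Some l \<Longrightarrow> l \<in> {1..n}"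
  obtains D f E g where "D \<subseteq> {1..n}" "f ` D \<subseteq> {1..n}" "E \<subseteq> {1..n}" "g ` E \<subseteq> {1..n}"
    "labelled n L = star n (pmap n D f) (mirror (pmap n E g))"
proof -
  define D where "D = {x \<in> {1..n}. L (Inl x) \<noteq> None}"
  define f where "f x = the (L (Inl x))" for x
  define E where "E = {y \<in> {1..n}. L (Inr y) \<noteq> None}"
  define g where "g y = the (L (Inr y))" for y
  let ?Lb = "pmap_label E g \<circ> flip_pt"
  have DX: "D \<subseteq> {1..n}" "f ` D \<subseteq> {1..n}" and EX: "E \<subseteq> {1..n}" "g ` E \<subseteq> {1..n}"
    using labels by (force simp: D_def f_def E_def g_def)+
  have "z \<in> f ` D \<longleftrightarrow> (\<exists>x\<in>{1..n}. L (Inl x) = Some z)"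
    and "z \<in> g ` E \<longleftrightarrow> (\<exists>y\<in>{1..n}. L (Inr y) = Some z)" for z
    by (force simp: D_def f_def E_def g_def)+
  moreover have "(\<exists>x\<in>{1..n}. L (Inl x) = Some z) \<longleftrightarrow> (\<exists>y\<in>{1..n}. L (Inr y) = Some z)" for z
    using L unfolding line_labelling_def by (metis Inl_in_carrierX Inr_in_carrierX option.distinct(1))
  ultimately have image: "f ` D = g ` E"
    by (simp add: set_eq_iff)
  have "star n (pmap n D f) (mirror (pmap n E g)) = labelled n (pull_label n D f ?Lb)"
    unfolding pmap_def[of n E g] mirror_labelled
    using DX line_labelling_comp_flip_pt[OF line_labelling_pmap_label[OF EX]] by (rule star_pmap_labelled)
  also have "\<dots> = labelled n L"
  proof (rule labelled_cong[where h = id])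
    have "survives n D f ?Lb l" for l
      using image by (auto simp: survives_def)
    then show "pull_label n D f ?Lb u = map_option id (L u)" if "u \<in> carrierX n" for u
      using that image
      by (cases u) (auto simp: pull_label_def pullback_label_def D_def f_def E_def g_def option.map_id)
  qed simp
  finally show ?thesis
    using that DX EX by simp
qed

lemma PIstar_factorization:
  assumes "P \<in> PIstar n"
  obtains D f E g where "D \<subseteq> {1..n}" "f ` D \<subseteq> {1..n}" "E \<subseteq> {1..n}" "g ` E \<subseteq> {1..n}"
    "P = star n (pmap n D f) (mirror (pmap n E g))"
proof -
  obtain L :: "pt \<Rightarrow> pt set option" where L: "line_labelling n L" "P = labelled n L"
    using assms by (rule PIstar_obtain_line_labelling)
  let ?labels = "{l. \<exists>u\<in>carrierX n. L u = Some l}"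
  define \<iota> where "\<iota> l = (SOME x. x \<in> {1..n} \<and> L (Inl x) = Some l)" for l
  have \<iota>: "\<iota> l \<in> {1..n} \<and> L (Inl (\<iota> l)) = Some l" if l: "l \<in> ?labels" for l
  proof -
    obtain u where "u \<in> carrierX n" "L u = Some l"
      using l by blast
    then have "\<exists>x\<in>{1..n}. L (Inl x) = L u"
      using L(1) unfolding line_labelling_def by blast
    then have "\<exists>x. x \<in> {1..n} \<and> L (Inl x) = Some l"
      using \<open>L u = Some l\<close> by auto
    then show ?thesis
      unfolding \<iota>_def by (rule someI_ex)
  qed
  have "inj_on \<iota> ?labels"
  proof (rule inj_onI)
    fix l l' assume l: "l \<in> ?labels" and l': "l' \<in> ?labels" and eq: "\<iota> l = \<iota> l'"
    have "Some l = L (Inl (\<iota> l))"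
      using \<iota>[OF l] by simp
    also have "\<dots> = Some l'"
      using \<iota>[OF l'] eq by simp
    finally show "l = l'"
      by simp
  qed
  then have "P = labelled n (map_option \<iota> \<circ> L)"
    unfolding L(2) by (intro labelled_cong[symmetric]) simp_all
  moreover have "line_labelling n (map_option \<iota> \<circ> L)"
    using L(1) unfolding line_labelling_def by (metis comp_apply option.map_disc_iff)
  moreover have "l \<in> {1..n}" if "u \<in> carrierX n" "(map_option \<iota> \<circ> L) u = Some l" for u l
    using that \<iota> by auto
  ultimately show ?thesis
    using that by (metis labelled_factorization)
qed

theorem mainTheorem18:
  fixes n :: nat
  assumes "n \<ge> 3"
  shows "semigen n (units n \<union> {gamma12 n, gamma12_inv n}) = PIstar n"
proof
  show "generated n \<subseteq> PIstar n"
    using generated_subset_PIstar[OF assms] by blast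
  show "PIstar n \<subseteq> generated n"
  proof
    fix P assume "P \<in> PIstar n"
    then obtain D f E g where "D \<subseteq> {1..n}" "f ` D \<subseteq> {1..n}" "E \<subseteq> {1..n}" "g ` E \<subseteq> {1..n}"
      and P: "P = star n (pmap n D f) (mirror (pmap n E g))"
      by (rule PIstar_factorization)
    then have "pmap n D f \<in> generated n" "mirror (pmap n E g) \<in> generated n"
      using pmap_generated mirror_generated assms by simp_all
    then show "P \<in> generated n"
      unfolding P by (rule semigen.prod)
  qed
qed

end
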